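(* Let $(\eta_k)_{k\in\mathbb{N}}$ be independent identically distributed random variables with values in $\mathbb{N}$, $P(\eta_k=m)=p_m$ ($p_m\ge0$, $\sum_{m=1}^\infty p_m=1$), and let $$\eta=\sum_{k=1}^\infty\frac{(-1)^{k-1}}{\eta_1(\eta_1+\eta_2)\cdots(\eta_1+\eta_2+\dots+\eta_k)}.$$ Then: (1) if $p_i=1$ for some $i\in\mathbb{N}$, the distribution of $\eta$ is degenerate (concentrated at one point); (2) in all other cases the distribution of $\eta$ is purely singularly continuous (i.e. it has no atoms and is singular with respect to Lebesgue measure). *)

theory Defs
  imports "HOL-Probability.Probability"
begin

text \<open>The random series: with 0-based indexing, X 0 = eta_1, X 1 = eta_2, ...
  eta = sum_{k>=0} (-1)^k / prod_{j=0..k} (X 0 + ... + X j).\<close>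
definition eta_series :: "(nat \<Rightarrow> 'a \<Rightarrow> nat) \<Rightarrow> 'a \<Rightarrow> real" where
  "eta_series X \<omega> =
     (\<Sum>k. (-1) ^ k / (\<Prod>j\<le>k. real (\<Sum>i\<le>j. X i \<omega>)))"

end

theory Submission
  imports Defs "HOL-Real_Asymp.Real_Asymp"
begin

text \<open>
  Write \<open>\<eta> = T(X\<^sub>1, X\<^sub>2, \<dots>)\<close>. The series is alternating with decreasing terms, so
  \<open>1/(x\<^sub>1 + 1) < T(x) < 1/x\<^sub>1\<close>, and \<open>1 - x\<^sub>1 T(x)\<close> is a series of the same kind in the remaining
  digits. Hence the digit sequence is a function of \<open>\<eta>\<close>. If some digit value has probability 1,
  the digits and so \<open>\<eta>\<close> are almost surely constant. Otherwise all values have probability at most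
  some \<open>q < 1\<close>, so each fixed digit sequence, and thus each value of \<open>\<eta>\<close>, has probability 0.
  For singularity fix a digit \<open>d\<close> of positive probability: almost surely it occurs infinitely
  often, while the reals whose \<open>n\<close>-th digit is \<open>d\<close> form a set of Lebesgue measure at most
  \<open>2^-n\<close>, so by Borel--Cantelli \<open>\<eta>\<close> lives on a null set.
\<close>

section \<open>Ostrogradsky series\<close>

text \<open>An Ostrogradsky series of the first kind with denominators the partial sums of the digits
  \<open>x\<close>, shifted by the offset \<open>u\<close> so that removing the first digit yields again a series of this
  form (\<open>ostrogradsky_shift\<close>).\<close>

definition ostrogradsky_term :: "nat \<Rightarrow> (nat \<Rightarrow> nat) \<Rightarrow> nat \<Rightarrow> real" where
  "ostrogradsky_term u x k = 1 / (\<Prod>j\<le>k. real (u + (\<Sum>i\<le>j. x i)))"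

definition ostrogradsky :: "nat \<Rightarrow> (nat \<Rightarrow> nat) \<Rightarrow> real" where
  "ostrogradsky u x = (\<Sum>k. (-1) ^ k * ostrogradsky_term u x k)"

lemma eta_series_eq_ostrogradsky: "eta_series X \<omega> = ostrogradsky 0 (\<lambda>i. X i \<omega>)"
  by (simp add: eta_series_def ostrogradsky_def ostrogradsky_term_def)

lemma ostrogradsky_term_0: "ostrogradsky_term u x 0 = 1 / real (u + x 0)"
  by (simp add: ostrogradsky_term_def)

lemma ostrogradsky_term_Suc:
  "ostrogradsky_term u x (Suc k) = ostrogradsky_term u x k / real (u + (\<Sum>i\<le>Suc k. x i))"
  by (simp add: ostrogradsky_term_def)

lemma ostrogradsky_term_nonneg: "0 \<le> ostrogradsky_term u x k"
  unfolding ostrogradsky_term_def by (intro divide_nonneg_nonneg prod_nonneg of_nat_0_le_iff zero_le_one)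

lemma ostrogradsky_term_le_half_power:
  assumes "\<And>i. x i \<ge> 1"
  shows "ostrogradsky_term u x k \<le> (1/2) ^ k"
proof (induction k)
  case 0
  show ?case using assms[of 0] by (simp add: ostrogradsky_term_0)
next
  case (Suc k)
  have "2 \<le> x 0 + x (Suc k)" using assms[of 0] assms[of "Suc k"] by simp
  also have "\<dots> \<le> (\<Sum>i\<le>Suc k. x i)"
    by (rule order_trans[OF _ sum_mono2[of "{..Suc k}" "{0, Suc k}"]]) auto
  finally have "2 \<le> real (u + (\<Sum>i\<le>Suc k. x i))" by linarith
  then have "ostrogradsky_term u x (Suc k) \<le> ostrogradsky_term u x k / 2"
    unfolding ostrogradsky_term_Suc using ostrogradsky_term_nonneg by (intro divide_left_mono) auto
  then show ?case using Suc.IH by simp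
qed

lemma ostrogradsky_term_decreasing:
  assumes "\<And>i. x i \<ge> 1"
  shows "ostrogradsky_term u x (Suc k) \<le> ostrogradsky_term u x k"
proof -
  have "x 0 \<le> (\<Sum>i\<le>Suc k. x i)" by (rule member_le_sum) auto
  then have "1 \<le> real (u + (\<Sum>i\<le>Suc k. x i))" using assms[of 0] by linarith
  then have "ostrogradsky_term u x (Suc k) \<le> ostrogradsky_term u x k / 1"
    unfolding ostrogradsky_term_Suc using ostrogradsky_term_nonneg by (intro divide_left_mono) auto
  then show ?thesis by simp
qed

lemma ostrogradsky_term_tendsto_0:
  assumes "\<And>i. x i \<ge> 1"
  shows "ostrogradsky_term u x \<longlonglongrightarrow> 0"
  by (rule real_tendsto_sandwich[of "\<lambda>_. 0" _ _ "\<lambda>k. (1/2) ^ k"])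
     (simp_all add: ostrogradsky_term_nonneg ostrogradsky_term_le_half_power[OF assms] LIMSEQ_power_zero)

lemma
  assumes "\<And>i. x i \<ge> 1"
  shows summable_ostrogradsky: "summable (\<lambda>k. (-1) ^ k * ostrogradsky_term u x k)"
    and ostrogradsky_le: "ostrogradsky u x \<le> 1 / real (u + x 0)"
proof -
  note Leibniz = summable_Leibniz'[OF ostrogradsky_term_tendsto_0[OF assms, of u]
      ostrogradsky_term_nonneg ostrogradsky_term_decreasing[OF assms], folded ostrogradsky_def]
  show "summable (\<lambda>k. (-1) ^ k * ostrogradsky_term u x k)" by (fact Leibniz(1))
  show "ostrogradsky u x \<le> 1 / real (u + x 0)" using Leibniz(4)[where n=0] by (simp add: ostrogradsky_term_0)
qed

lemma ostrogradsky_shift: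
  assumes "\<And>i. x i \<ge> 1"
  shows "ostrogradsky u x = (1 - ostrogradsky (u + x 0) (\<lambda>i. x (Suc i))) / real (u + x 0)"
proof -
  let ?a = "real (u + x 0)" and ?y = "\<lambda>i. x (Suc i)"
  have term_shift: "ostrogradsky_term u x (Suc k) = ostrogradsky_term (u + x 0) ?y k / ?a" for k
  proof -
    have "(\<Prod>j\<le>Suc k. real (u + (\<Sum>i\<le>j. x i))) = ?a * (\<Prod>j\<le>k. real (u + (\<Sum>i\<le>Suc j. x i)))"
      by (subst prod.atMost_Suc_shift) (simp del: prod.atMost_Suc)
    also have "\<dots> = ?a * (\<Prod>j\<le>k. real (u + x 0 + (\<Sum>i\<le>j. ?y i)))"
      by (intro arg_cong[where f="(*) ?a"] prod.cong refl, subst sum.atMost_Suc_shift) simp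
    finally have prod_shift: "(\<Prod>j\<le>Suc k. real (u + (\<Sum>i\<le>j. x i))) = \<dots>" .
    show ?thesis unfolding ostrogradsky_term_def prod_shift by simp
  qed
  have "ostrogradsky u x = ostrogradsky_term u x 0 + (\<Sum>k. (-1) ^ Suc k * ostrogradsky_term u x (Suc k))"
    unfolding ostrogradsky_def by (subst suminf_split_head[OF summable_ostrogradsky[OF assms]]) simp
  also have "(\<Sum>k. (-1) ^ Suc k * ostrogradsky_term u x (Suc k)) = - ostrogradsky (u + x 0) ?y / ?a"
    using summable_ostrogradsky[of ?y "u + x 0"] assms
    by (simp add: term_shift ostrogradsky_def suminf_divide suminf_minus summable_minus)
  finally show ?thesis by (simp add: ostrogradsky_term_0 diff_divide_distrib)
qed

lemma one_div_succ_bound_iff: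
  fixes a r :: real
  assumes "a > 0"
  shows "1 / (a + 1) \<le> (1 - r) / a \<longleftrightarrow> r \<le> 1 / (a + 1)"
    and "1 / (a + 1) < (1 - r) / a \<longleftrightarrow> r < 1 / (a + 1)"
  using assms by (simp_all add: field_simps)

lemma ostrogradsky_ge:
  assumes "\<And>i. x i \<ge> 1"
  shows "1 / real (u + x 0 + 1) \<le> ostrogradsky u x"
proof -
  let ?r = "ostrogradsky (u + x 0) (\<lambda>i. x (Suc i))"
  have "?r \<le> 1 / real (u + x 0 + x 1)"
    using ostrogradsky_le[of "\<lambda>i. x (Suc i)", OF assms, of "u + x 0"] by simp
  also have "\<dots> \<le> 1 / (real (u + x 0) + 1)" using assms[of 1] by (simp add: frac_le)
  finally show ?thesis
    using ostrogradsky_shift[OF assms, of u] one_div_succ_bound_iff(1)[of "real (u + x 0)" ?r] assms[of 0]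
    by (simp add: add_ac)
qed

lemma ostrogradsky_pos:
  assumes "\<And>i. x i \<ge> 1"
  shows "0 < ostrogradsky u x"
  by (rule less_le_trans[OF _ ostrogradsky_ge[OF assms]]) simp

lemma ostrogradsky_less:
  assumes "\<And>i. x i \<ge> 1"
  shows "ostrogradsky u x < 1 / real (u + x 0)"
proof -
  have "0 < ostrogradsky (u + x 0) (\<lambda>i. x (Suc i))" by (rule ostrogradsky_pos[OF assms])
  then show ?thesis
    using ostrogradsky_shift[OF assms, of u] assms[of 0] by (simp add: divide_strict_right_mono)
qed

lemma ostrogradsky_greater:
  assumes "\<And>i. x i \<ge> 1"
  shows "1 / real (u + x 0 + 1) < ostrogradsky u x"
proof -
  let ?r = "ostrogradsky (u + x 0) (\<lambda>i. x (Suc i))"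
  have "?r < 1 / real (u + x 0 + x 1)"
    using ostrogradsky_less[of "\<lambda>i. x (Suc i)", OF assms, of "u + x 0"] by simp
  also have "\<dots> \<le> 1 / (real (u + x 0) + 1)" using assms[of 1] by (simp add: frac_le)
  finally show ?thesis
    using ostrogradsky_shift[OF assms, of u] one_div_succ_bound_iff(2)[of "real (u + x 0)" ?r] assms[of 0]
    by (simp add: add_ac)
qed

lemma ostrogradsky_eq_imp_head_eq:
  assumes "\<And>i. x i \<ge> 1" "\<And>i. y i \<ge> 1" "ostrogradsky u x = ostrogradsky u y"
  shows "x 0 = y 0"
proof -
  have "\<not> x 0 < y 0" if "\<And>i. x i \<ge> 1" "\<And>i. y i \<ge> 1" "ostrogradsky u x = ostrogradsky u y"
    for x y :: "nat \<Rightarrow> nat"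
  proof
    assume "x 0 < y 0"
    have "ostrogradsky u y < 1 / real (u + y 0)" by (rule ostrogradsky_less[OF that(2)])
    also have "\<dots> \<le> 1 / real (u + x 0 + 1)" using \<open>x 0 < y 0\<close> by (simp add: frac_le)
    also have "\<dots> < ostrogradsky u x" by (rule ostrogradsky_greater[OF that(1)])
    finally show False using that(3) by simp
  qed
  then show ?thesis using assms by (metis linorder_neqE_nat)
qed

lemma ostrogradsky_inj:
  assumes "\<And>i. x i \<ge> 1" "\<And>i. y i \<ge> 1" "ostrogradsky u x = ostrogradsky u y"
  shows "x = y"
proof
  fix n
  show "x n = y n"
    using assms
  proof (induction n arbitrary: u x y)
    case 0
    then show ?case by (rule ostrogradsky_eq_imp_head_eq)
  next
    case (Suc n)
    have head: "x 0 = y 0" using Suc.prems by (rule ostrogradsky_eq_imp_head_eq)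
    have "real (u + x 0) \<noteq> 0" using Suc.prems(1)[of 0] by simp
    then have "ostrogradsky (u + x 0) (\<lambda>i. x (Suc i)) = ostrogradsky (u + x 0) (\<lambda>i. y (Suc i))"
      using Suc.prems(3) ostrogradsky_shift[OF Suc.prems(1), of u] ostrogradsky_shift[OF Suc.prems(2), of u]
      by (simp add: head)
    then show ?case using Suc.IH[of "\<lambda>i. x (Suc i)" "\<lambda>i. y (Suc i)"] Suc.prems(1,2) by simp
  qed
qed

section \<open>Lebesgue measure of the digit cylinders\<close>

lemma affine_preimage_borel:
  fixes c t :: real
  assumes "A \<in> sets borel"
  shows "(\<lambda>z. c - t * z) -` A \<in> sets borel"
  by (rule measurable_sets_borel[OF _ assms]) measurable

lemma emeasure_lborel_affine_preimage:
  fixes c t :: real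
  assumes "t > 0" "A \<in> sets borel"
  shows "emeasure lborel ((\<lambda>z. c - t * z) -` A) = ennreal (1 / t) * emeasure lborel A"
proof -
  have [measurable]: "(\<lambda>z::real. c + (- t) * z) \<in> borel_measurable borel" by measurable
  have "emeasure lborel A = ennreal t * emeasure lborel ((\<lambda>z. c - t * z) -` A)"
    using assms by (subst lborel_real_affine[of "-t" c])
      (simp_all add: emeasure_density emeasure_distr nn_integral_cmult_indicator)
  then show ?thesis
    using assms by (simp add: mult.assoc[symmetric] ennreal_mult[symmetric])
qed

lemma emeasure_affine_preimage_le:
  fixes c t r :: real
  assumes "t > 0" "A \<in> sets borel" "emeasure lborel A \<le> ennreal r"
  shows "emeasure lborel ((\<lambda>z. c - t * z) -` A) \<le> ennreal (r / t)"
proof -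
  have "emeasure lborel ((\<lambda>z. c - t * z) -` A) \<le> ennreal (1 / t) * ennreal r"
    unfolding emeasure_lborel_affine_preimage[OF assms(1,2)] by (rule mult_left_mono[OF assms(3)]) simp
  also have "\<dots> \<le> ennreal (r / t)"
    using assms(1) by (cases "r \<ge> 0") (simp_all add: ennreal_mult[symmetric] ennreal_neg)
  finally show ?thesis .
qed

lemma sums_inverse_consecutive_triples:
  "(\<lambda>k. 1 / ((real u + k + 1) * (real u + k + 2) * (real u + k + 3)))
     sums (1 / (2 * ((real u + 1) * (real u + 2))))"
proof -
  define F where "F k = 1 / (2 * ((real u + k + 1) * (real u + k + 2)))" for k :: nat
  have partial_fractions: "1 / (2 * (a * b)) - 1 / (2 * (b * c)) = 1 / (a * b * c)"
    if "a > 0" "b = a + 1" "c = a + 2" for a b c :: real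
  proof -
    have "a \<noteq> 0" "b \<noteq> 0" "c \<noteq> 0" using that by auto
    then show ?thesis by (simp add: field_simps) (simp add: that algebra_simps)
  qed
  have "F k - F (Suc k) = 1 / ((real u + k + 1) * (real u + k + 2) * (real u + k + 3))" for k
    using partial_fractions[of "real u + k + 1" "real u + k + 2" "real u + k + 3"] by (simp add: F_def add_ac)
  moreover have "F \<longlonglongrightarrow> 0" unfolding F_def by real_asymp
  then have "(\<lambda>k. F k - F (Suc k)) sums (F 0)" using telescope_sums' by fastforce
  ultimately show ?thesis by (simp add: F_def)
qed

text \<open>A countable union of affine preimages of intervals containing every value
  \<open>ostrogradsky u x\<close> with \<open>x n = d\<close>: by \<open>ostrogradsky_shift\<close>, the map \<open>z \<mapsto> 1 - t z\<close> with
  \<open>t = u + x 0\<close> strips off the first digit.\<close>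

fun digit_cover :: "nat \<Rightarrow> nat \<Rightarrow> nat \<Rightarrow> real set" where
  "digit_cover d 0 u = {1 / real (u + d + 1) .. 1 / real (u + d)}"
| "digit_cover d (Suc n) u =
     (\<Union>k. (\<lambda>z. 1 - real (u + Suc k) * z) -` digit_cover d n (u + Suc k))"

lemma digit_cover_borel [measurable]: "digit_cover d n u \<in> sets borel"
  by (induction n arbitrary: u) (auto intro: affine_preimage_borel)

lemma ostrogradsky_mem_digit_cover:
  assumes "\<And>i. x i \<ge> 1" "x n = d"
  shows "ostrogradsky u x \<in> digit_cover d n u"
  using assms
proof (induction n arbitrary: u x)
  case 0
  then show ?case using ostrogradsky_ge[of x u] ostrogradsky_le[of x u] by simp
next
  case (Suc n)
  obtain k where k: "x 0 = Suc k" using Suc.prems(1)[of 0] by (cases "x 0") auto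
  have "real (u + x 0) \<noteq> 0" using k by simp
  then have "1 - real (u + x 0) * ostrogradsky u x = ostrogradsky (u + x 0) (\<lambda>i. x (Suc i))"
    using ostrogradsky_shift[of x u] Suc.prems(1) by simp
  moreover have "ostrogradsky (u + x 0) (\<lambda>i. x (Suc i)) \<in> digit_cover d n (u + x 0)"
    using Suc.IH[of "\<lambda>i. x (Suc i)"] Suc.prems by simp
  ultimately show ?case unfolding digit_cover.simps k by (intro UN_I[of k]) auto
qed

lemma emeasure_digit_cover_0_le:
  assumes "d \<ge> 1"
  shows "emeasure lborel (digit_cover d 0 u) \<le> ennreal (1 / ((real u + 1) * (real u + 2)))"
proof -
  define a where "a = real (u + d)"
  have a: "a \<ge> real u + 1" using assms by (simp add: a_def)
  have "1 / a - 1 / (a + 1) = 1 / (a * (a + 1))"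
    using a by (simp add: field_simps)
  also have "\<dots> \<le> 1 / ((real u + 1) * (real u + 2))"
    using a by (intro divide_left_mono mult_mono) auto
  finally have "1 / a - 1 / (a + 1) \<le> 1 / ((real u + 1) * (real u + 2))" .
  moreover have "emeasure lborel (digit_cover d 0 u) = ennreal (1 / a - 1 / (a + 1))"
    using a by (simp add: a_def frac_le add_ac)
  ultimately show ?thesis by (simp add: ennreal_leI)
qed

text \<open>Each level of the recursion costs a factor
  \<open>\<Sum>t>u. 1 / (t (t + 1) (t + 2)) = 1 / (2 (u + 1) (u + 2))\<close>, i.e. one half of the bound.\<close>

lemma emeasure_digit_cover_le:
  assumes "d \<ge> 1"
  shows "emeasure lborel (digit_cover d n u) \<le> ennreal (1 / (2 ^ n * ((real u + 1) * (real u + 2))))"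
proof (induction n arbitrary: u)
  case 0
  then show ?case using emeasure_digit_cover_0_le[OF assms] by simp
next
  case (Suc n)
  define t where "t k = real (u + Suc k)" for k
  define c :: real where "c = 1 / 2 ^ n"
  have piece: "emeasure lborel ((\<lambda>z. 1 - real (u + Suc k) * z) -` digit_cover d n (u + Suc k))
      \<le> ennreal (c * (1 / (t k * (t k + 1) * (t k + 2))))" for k
    using emeasure_affine_preimage_le[OF _ digit_cover_borel Suc.IH[of "u + Suc k"], of "real (u + Suc k)" 1]
    by (simp add: t_def c_def field_simps)
  have sums: "(\<lambda>k. c * (1 / (t k * (t k + 1) * (t k + 2))))
      sums (c * (1 / (2 * ((real u + 1) * (real u + 2)))))"
    using sums_mult[OF sums_inverse_consecutive_triples[of u], of c] by (simp add: t_def add_ac)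
  have "emeasure lborel (digit_cover d (Suc n) u)
      \<le> (\<Sum>k. emeasure lborel ((\<lambda>z. 1 - real (u + Suc k) * z) -` digit_cover d n (u + Suc k)))"
    unfolding digit_cover.simps
    by (rule emeasure_subadditive_countably) (auto intro: affine_preimage_borel digit_cover_borel)
  also have "\<dots> \<le> (\<Sum>k. ennreal (c * (1 / (t k * (t k + 1) * (t k + 2)))))"
    by (intro suminf_le piece) auto
  also have "\<dots> = ennreal (c * (1 / (2 * ((real u + 1) * (real u + 2)))))"
    using sums by (subst suminf_ennreal2) (auto simp: sums_iff t_def c_def)
  finally show ?case by (simp add: c_def mult_ac)
qed

lemma digit_cover_limsup_null:
  assumes "d \<ge> 1"
  shows "limsup (\<lambda>n. digit_cover d n 0) \<in> null_sets lborel"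
proof (rule borel_cantelli_limsup1)
  have bound: "emeasure lborel (digit_cover d n 0) \<le> ennreal ((1/2) ^ n / 2)" for n
    using emeasure_digit_cover_le[OF assms, of n 0] by (simp add: power_one_over)
  show "emeasure lborel (digit_cover d n 0) < \<infinity>" for n
    by (rule le_less_trans[OF bound]) simp
  show "summable (\<lambda>n. measure lborel (digit_cover d n 0))"
  proof (rule summable_comparison_test)
    have "measure lborel (digit_cover d n 0) \<le> (1/2) ^ n / 2" for n
      unfolding measure_def by (rule enn2real_leI[OF _ bound]) simp
    then show "\<exists>N. \<forall>n\<ge>N. norm (measure lborel (digit_cover d n 0)) \<le> (1/2) ^ n / 2"
      by simp
    show "summable (\<lambda>n. (1/2::real) ^ n / 2)"
      by (intro summable_divide summable_geometric) simp
  qed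
qed simp

lemma ostrogradsky_mem_limsup_digit_cover:
  assumes "\<And>i. x i \<ge> 1" "\<exists>\<^sub>F n in sequentially. x n = d"
  shows "ostrogradsky 0 x \<in> limsup (\<lambda>n. digit_cover d n 0)"
  unfolding mem_limsup_iff using assms(2)
  by (rule frequently_elim1) (rule ostrogradsky_mem_digit_cover[OF assms(1)])

section \<open>The random series\<close>

lemma le_zero_if_le_power:
  fixes a q :: real
  assumes "\<And>n. a \<le> q ^ Suc n" "0 \<le> q" "q < 1"
  shows "a \<le> 0"
proof (rule LIMSEQ_le_const)
  show "(\<lambda>n. q ^ Suc n) \<longlonglongrightarrow> 0"
    using LIMSEQ_Suc[OF LIMSEQ_power_zero[of q]] assms(2,3) by simp
qed (use assms(1) in auto)

lemma measurable_eta_series: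
  assumes [measurable]: "\<And>k. X k \<in> measurable M (count_space UNIV)"
  shows "eta_series X \<in> borel_measurable M"
  unfolding eta_series_def[abs_def] by measurable

context prob_space
begin

lemma indep_vars_random_variable:
  assumes "indep_vars M' X I" "i \<in> I"
  shows "random_variable (M' i) (X i)"
  using assms unfolding indep_vars_def2 by auto

lemma indep_vars_prob_Ball:
  assumes "indep_vars (\<lambda>_. count_space UNIV) X I" "J \<subseteq> I" "finite J" "J \<noteq> {}"
  shows "prob {\<omega> \<in> space M. \<forall>j\<in>J. X j \<omega> \<in> B j} = (\<Prod>j\<in>J. prob {\<omega> \<in> space M. X j \<omega> \<in> B j})"
proof -
  have "{\<omega> \<in> space M. \<forall>j\<in>J. X j \<omega> \<in> B j} = (\<Inter>j\<in>J. X j -` B j \<inter> space M)"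
    using assms(4) by auto
  moreover have "{\<omega> \<in> space M. X j \<omega> \<in> B j} = X j -` B j \<inter> space M" for j
    by auto
  ultimately show ?thesis using indep_varsD[OF assms(1,4,3,2)] by simp
qed

lemma prob_all_eq_eq_0:
  fixes X :: "nat \<Rightarrow> 'a \<Rightarrow> 'b"
  assumes "indep_vars (\<lambda>_. count_space UNIV) X UNIV"
    and "\<And>k m. prob {\<omega> \<in> space M. X k \<omega> = m} \<le> q" "q < 1"
  shows "prob {\<omega> \<in> space M. \<forall>k. X k \<omega> = c k} = 0"
proof -
  have [measurable]: "X k \<in> measurable M (count_space UNIV)" for k
    using indep_vars_random_variable[OF assms(1)] by simp
  have "prob {\<omega> \<in> space M. \<forall>k. X k \<omega> = c k} \<le> q ^ Suc n" for n
  proof -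
    have "{\<omega> \<in> space M. \<forall>k\<in>{..n}. X k \<omega> = c k} \<in> events" by measurable
    then have "prob {\<omega> \<in> space M. \<forall>k. X k \<omega> = c k} \<le> prob {\<omega> \<in> space M. \<forall>k\<in>{..n}. X k \<omega> = c k}"
      by (intro finite_measure_mono) auto
    also have "\<dots> = prob {\<omega> \<in> space M. \<forall>k\<in>{..n}. X k \<omega> \<in> {c k}}" by simp
    also have "\<dots> = (\<Prod>k\<le>n. prob {\<omega> \<in> space M. X k \<omega> \<in> {c k}})"
      using assms(1) by (rule indep_vars_prob_Ball) auto
    also have "\<dots> \<le> (\<Prod>k\<le>n. q)"
      using assms(2) by (intro prod_mono) auto
    finally show ?thesis by simp
  qed
  moreover have "0 \<le> q" using measure_nonneg assms(2)[of 0 "c 0"] by (rule order_trans)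
  ultimately have "prob {\<omega> \<in> space M. \<forall>k. X k \<omega> = c k} \<le> 0"
    using assms(3) by (rule le_zero_if_le_power)
  then show ?thesis using measure_nonneg antisym by blast
qed

lemma AE_frequently_eq:
  fixes X :: "nat \<Rightarrow> 'a \<Rightarrow> 'b"
  assumes "indep_vars (\<lambda>_. count_space UNIV) X UNIV"
    and "\<And>k. prob {\<omega> \<in> space M. X k \<omega> = d} = r" "r > 0"
  shows "AE \<omega> in M. \<exists>\<^sub>F n in sequentially. X n \<omega> = d"
proof -
  have [measurable]: "X k \<in> measurable M (count_space UNIV)" for k
    using indep_vars_random_variable[OF assms(1)] by simp
  have "AE \<omega> in M. \<exists>n\<ge>N. X n \<omega> = d" for N
  proof -
    let ?E = "{\<omega> \<in> space M. \<forall>n\<ge>N. X n \<omega> \<noteq> d}"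
    have "prob ?E \<le> (1 - r) ^ Suc K" for K
    proof -
      have "prob ?E \<le> prob {\<omega> \<in> space M. \<forall>n\<in>{N..N+K}. X n \<omega> \<in> - {d}}"
        by (intro finite_measure_mono) auto
      also have "\<dots> = (\<Prod>n=N..N+K. prob {\<omega> \<in> space M. X n \<omega> \<in> - {d}})"
        using assms(1) by (rule indep_vars_prob_Ball) auto
      also have "\<dots> = (\<Prod>n=N..N+K. 1 - r)"
      proof (intro prod.cong refl)
        fix n
        have "{\<omega> \<in> space M. X n \<omega> \<in> - {d}} = space M - {\<omega> \<in> space M. X n \<omega> = d}" by auto
        then show "prob {\<omega> \<in> space M. X n \<omega> \<in> - {d}} = 1 - r"
          using prob_compl[of "{\<omega> \<in> space M. X n \<omega> = d}"] assms(2) by simp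
      qed
      finally show ?thesis by simp
    qed
    moreover have "r \<le> 1" using assms(2)[of 0] by (metis prob_le_1)
    ultimately have "prob ?E \<le> 0" using assms(3) by (intro le_zero_if_le_power) auto
    then have "prob ?E = 0" using measure_nonneg antisym by blast
    then show ?thesis by (subst AE_iff_measurable[OF _ refl]) (auto simp: emeasure_eq_measure)
  qed
  then show ?thesis unfolding frequently_sequentially AE_all_countable ..
qed

text \<open>At most one value can have probability above \<open>1/2\<close>, and it then dominates all others.\<close>

lemma ex_uniform_bound_prob_eq:
  fixes Y :: "'a \<Rightarrow> 'b"
  assumes [measurable]: "Y \<in> measurable M (count_space UNIV)"
    and "\<And>m. prob {\<omega> \<in> space M. Y \<omega> = m} < 1"
  shows "\<exists>q<1. \<forall>m. prob {\<omega> \<in> space M. Y \<omega> = m} \<le> q"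
proof (cases "\<exists>c. prob {\<omega> \<in> space M. Y \<omega> = c} > 1/2")
  case True
  then obtain c where c: "prob {\<omega> \<in> space M. Y \<omega> = c} > 1/2" by blast
  have "prob {\<omega> \<in> space M. Y \<omega> = m} \<le> prob {\<omega> \<in> space M. Y \<omega> = c}" for m
  proof (cases "m = c")
    case False
    then have "prob {\<omega> \<in> space M. Y \<omega> = m} + prob {\<omega> \<in> space M. Y \<omega> = c}
        = prob ({\<omega> \<in> space M. Y \<omega> = m} \<union> {\<omega> \<in> space M. Y \<omega> = c})"
      by (subst finite_measure_Union) auto
    also have "\<dots> \<le> 1" by (rule prob_le_1)
    finally show ?thesis using c by linarith
  qed simp
  then show ?thesis using assms(2) by blast
next
  case False
  then show ?thesis by (intro exI[of _ "1/2"]) (auto simp: not_less)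
qed

lemma eta_series_degenerate:
  assumes [measurable]: "\<And>k. X k \<in> measurable M (count_space UNIV)"
    and "\<And>k. prob {\<omega> \<in> space M. X k \<omega> = i} = 1"
  shows "prob {\<omega> \<in> space M. eta_series X \<omega> = ostrogradsky 0 (\<lambda>_. i)} = 1"
proof -
  have [measurable]: "eta_series X \<in> borel_measurable M" by (rule measurable_eta_series) measurable
  have "AE \<omega> in M. X k \<omega> = i" for k
    using assms(2) by (subst prob_Collect_eq_1[symmetric]) simp_all
  then have "AE \<omega> in M. \<forall>k. X k \<omega> = i" by (simp add: AE_all_countable)
  then have "AE \<omega> in M. eta_series X \<omega> = ostrogradsky 0 (\<lambda>_. i)"
    by eventually_elim (simp add: eta_series_eq_ostrogradsky)
  moreover have "{\<omega> \<in> space M. eta_series X \<omega> = ostrogradsky 0 (\<lambda>_. i)} \<in> events" by measurable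
  ultimately show ?thesis by (simp add: prob_Collect_eq_1)
qed

lemma eta_series_no_atoms:
  assumes "indep_vars (\<lambda>_. count_space UNIV) X UNIV"
    and "\<And>k \<omega>. \<omega> \<in> space M \<Longrightarrow> X k \<omega> \<ge> 1"
    and "\<And>k m. prob {\<omega> \<in> space M. X k \<omega> = m} = p m" "\<And>m. p m < 1"
  shows "prob {\<omega> \<in> space M. eta_series X \<omega> = x} = 0"
proof (cases "\<exists>\<omega>\<^sub>0 \<in> space M. eta_series X \<omega>\<^sub>0 = x")
  case True
  then obtain \<omega>\<^sub>0 where \<omega>\<^sub>0: "\<omega>\<^sub>0 \<in> space M" "eta_series X \<omega>\<^sub>0 = x" by blast
  have [measurable]: "X k \<in> measurable M (count_space UNIV)" for k
    using indep_vars_random_variable[OF assms(1)] by simp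
  obtain q where q: "q < 1" "\<And>k m. prob {\<omega> \<in> space M. X k \<omega> = m} \<le> q"
    using ex_uniform_bound_prob_eq[of "X 0"] assms(3,4) by auto
  have "(\<lambda>k. X k \<omega>) = (\<lambda>k. X k \<omega>\<^sub>0)" if "\<omega> \<in> space M" "eta_series X \<omega> = x" for \<omega>
    using that \<omega>\<^sub>0 assms(2) by (intro ostrogradsky_inj[of _ _ 0]) (simp_all add: eta_series_eq_ostrogradsky)
  then have "{\<omega> \<in> space M. eta_series X \<omega> = x} \<subseteq> {\<omega> \<in> space M. \<forall>k. X k \<omega> = X k \<omega>\<^sub>0}"
    by (auto simp: fun_eq_iff)
  then have "prob {\<omega> \<in> space M. eta_series X \<omega> = x} \<le> prob {\<omega> \<in> space M. \<forall>k. X k \<omega> = X k \<omega>\<^sub>0}"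
    by (intro finite_measure_mono) measurable
  also have "\<dots> = 0" using assms(1) q(2,1) by (rule prob_all_eq_eq_0)
  finally show ?thesis using measure_nonneg antisym by blast
next
  case False
  then have "{\<omega> \<in> space M. eta_series X \<omega> = x} = {}" by blast
  then show ?thesis by (simp only: measure_empty)
qed

lemma eta_series_singular:
  assumes "indep_vars (\<lambda>_. count_space UNIV) X UNIV"
    and "\<And>k \<omega>. \<omega> \<in> space M \<Longrightarrow> X k \<omega> \<ge> 1"
    and "\<And>k. prob {\<omega> \<in> space M. X k \<omega> = d} = r" "r > 0" "d \<ge> 1"
  shows "\<exists>S \<in> sets lborel. emeasure lborel S = 0 \<and> prob {\<omega> \<in> space M. eta_series X \<omega> \<in> S} = 1"
proof (intro bexI conjI)
  let ?S = "limsup (\<lambda>n. digit_cover d n 0)"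
  have null: "?S \<in> null_sets lborel" by (rule digit_cover_limsup_null[OF assms(5)])
  then show "?S \<in> sets lborel" "emeasure lborel ?S = 0" by auto
  have [measurable]: "X k \<in> measurable M (count_space UNIV)" for k
    using indep_vars_random_variable[OF assms(1)] by simp
  have [measurable]: "eta_series X \<in> borel_measurable M" by (rule measurable_eta_series) measurable
  have [measurable]: "?S \<in> sets borel" using null_setsD2[OF null] by simp
  have "AE \<omega> in M. eta_series X \<omega> \<in> ?S"
    using AE_frequently_eq[OF assms(1,3,4)] AE_space
    by eventually_elim (auto simp: eta_series_eq_ostrogradsky intro!: ostrogradsky_mem_limsup_digit_cover assms(2))
  moreover have "{\<omega> \<in> space M. eta_series X \<omega> \<in> ?S} \<in> events" by measurable
  ultimately show "prob {\<omega> \<in> space M. eta_series X \<omega> \<in> ?S} = 1"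
    by (simp add: prob_Collect_eq_1)
qed

end

theorem theorem5:
  fixes M :: "'a measure" and X :: "nat \<Rightarrow> 'a \<Rightarrow> nat" and p :: "nat \<Rightarrow> real"
  assumes "prob_space M"
    and "prob_space.indep_vars M (\<lambda>_. count_space UNIV) X UNIV"
    and "\<And>k \<omega>. \<omega> \<in> space M \<Longrightarrow> X k \<omega> \<ge> 1"
    and "\<And>k m. measure M {\<omega> \<in> space M. X k \<omega> = m} = p m"
    and "\<And>m. p m \<ge> 0"
    and "(\<lambda>m. p (Suc m)) sums 1"
  shows "((\<exists>i\<ge>1. p i = 1) \<longrightarrow>
            (\<exists>c. measure M {\<omega> \<in> space M. eta_series X \<omega> = c} = 1))
       \<and> ((\<nexists>i. i \<ge> 1 \<and> p i = 1) \<longrightarrow>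
            (\<forall>x. measure M {\<omega> \<in> space M. eta_series X \<omega> = x} = 0)
            \<and> (\<exists>S \<in> sets lborel. emeasure lborel S = 0 \<and>
                 measure M {\<omega> \<in> space M. eta_series X \<omega> \<in> S} = 1))"
proof -
  interpret prob_space M by (fact assms(1))
  show ?thesis
  proof (intro conjI impI)
    assume "\<exists>i\<ge>1. p i = 1"
    then obtain i where "p i = 1" by blast
    then have "prob {\<omega> \<in> space M. eta_series X \<omega> = ostrogradsky 0 (\<lambda>_. i)} = 1"
      using indep_vars_random_variable[OF assms(2)] assms(4) by (intro eta_series_degenerate) simp_all
    then show "\<exists>c. prob {\<omega> \<in> space M. eta_series X \<omega> = c} = 1" by blast
  next
    assume no_point_mass: "\<nexists>i. i \<ge> 1 \<and> p i = 1"
    have "{\<omega> \<in> space M. X 0 \<omega> = 0} = {}" using assms(3)[of _ 0] by fastforce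
    then have "p 0 = 0" using assms(4)[of 0 0] by (metis measure_empty)
    then have "p m < 1" for m
    proof (cases m)
      case (Suc n)
      then have "p m \<noteq> 1" using no_point_mass by auto
      then show ?thesis using assms(4)[of 0 m] prob_le_1[of "{\<omega> \<in> space M. X 0 \<omega> = m}"] by linarith
    qed simp
    then show "\<forall>x. prob {\<omega> \<in> space M. eta_series X \<omega> = x} = 0"
      using eta_series_no_atoms[OF assms(2,3,4)] by blast
    have "\<not> (\<lambda>m. p (Suc m)) sums 0" using sums_unique2[OF assms(6)] by fastforce
    moreover have "(\<lambda>m. p (Suc m)) sums 0" if "\<forall>m. p (Suc m) = 0" using that by simp
    ultimately obtain m where "p (Suc m) \<noteq> 0" by blast
    then have "p (Suc m) > 0" using assms(5)[of "Suc m"] by linarith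
    then show "\<exists>S \<in> sets lborel. emeasure lborel S = 0 \<and> prob {\<omega> \<in> space M. eta_series X \<omega> \<in> S} = 1"
      by (intro eta_series_singular[OF assms(2,3,4)]) auto
  qed
qed

end
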